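(* Suppose Assumption A1 holds and $F^*>-\infty$. Then Algorithm (1-RCD), with indices $i_k$ drawn i.i.d. from the uniform distribution on $\{1,\dots,N\}$, generates a sequence $x^k$ satisfying, for all $k\ge0$, $$\min_{0\le l\le k} E\left[\left(M_1(x^l,L)\right)^2\right]\le \frac{2N\,(F(x^0)-F^* )}{k+1},$$ where the expectation is over the random index choices.
   Context: Block structure: $n=\sum_{i=1}^N n_i$, $I_n=[U_1\ \dots\ U_N]$ with $U_i\in\mathbb{R}^{n\times n_i}$, $x_i=U_i^Tx$, $\nabla_i f(x)=U_i^T\nabla f(x)$. Problem: $F^*=\min_{x\in\mathbb{R}^n}F(x):=f(x)+h(x)$. Assumption A1: (i) $f$ is differentiable and there are constants $L_i>0$ with $\|\nabla_i f(x+U_is_i)-\nabla_i f(x)\|\le L_i\|s_i\|$ for all $s_i\in\mathbb{R}^{n_i}$, $x\in\mathbb{R}^n$, $i=1,\dots,N$; (ii) $h$ is proper, convex, continuous and block separable, $h(x)=\sum_{i=1}^N h_i(x_i)$ with each $h_i:\mathbb{R}^{n_i}\to\mathbb{R}$ convex. $L=[L_1\dots L_N]^T$. Algorithm (1-RCD): given $x^0\in\mathbb{R}^n$, for $k\ge0$ choose an index $i_k\in\{1,\dots,N\}$ at random (i.i.d. across iterations), compute $d_{i_k}=\arg\min_{s\in\mathbb{R}^{n_{i_k}}}\ f(x^k)+\langle\nabla_{i_k}f(x^k),s\rangle+\frac{L_{i_k}}{2}\|s\|^2+h(x^k+U_{i_k}s)$, and set $x^{k+1}=x^k+U_{i_k}d_{i_k}$.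 Notation: $\|x\|_L=(\sum_i L_i\|x_i\|^2)^{1/2}$, $\|y\|_L^*=(\sum_i L_i^{-1}\|y_i\|^2)^{1/2}$, $D_L=\mathrm{diag}(L_1I_{n_1},\dots,L_NI_{n_N})$, $d_L(x)=\arg\min_{s\in\mathbb{R}^n} f(x)+\langle\nabla f(x),s\rangle+\frac12\|s\|_L^2+h(x+s)$, $M_1(x,L)=\|D_L d_L(x)\|_L^*$. *)

theory Defs
  imports "HOL-Analysis.Analysis"
begin

text \<open>Coordinates of R^n are the finite type 'n; blocks are the finite type 'm
  (so N = CARD('m)); blk j is the block containing coordinate j.
  A vector of R^{n_i} is identified with its embedding U_i s in R^n, i.e. a vector
  supported on block i.\<close>

definition blockspace :: "('n \<Rightarrow> 'm) \<Rightarrow> 'm \<Rightarrow> (real^'n) set" where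
  "blockspace blk i = {s. \<forall>j. blk j \<noteq> i \<longrightarrow> s $ j = 0}"

text \<open>U_i U_i^T y : the block-i component of y, embedded in R^n.\<close>
definition bproj :: "('n \<Rightarrow> 'm) \<Rightarrow> 'm \<Rightarrow> real^'n \<Rightarrow> real^'n" where
  "bproj blk i y = (\<chi> j. if blk j = i then y $ j else 0)"

definition normL :: "('n \<Rightarrow> 'm::finite) \<Rightarrow> ('m \<Rightarrow> real) \<Rightarrow> real^'n \<Rightarrow> real" where
  "normL blk L x = sqrt (\<Sum>i\<in>UNIV. L i * (norm (bproj blk i x))\<^sup>2)"

definition dnormL :: "('n \<Rightarrow> 'm::finite) \<Rightarrow> ('m \<Rightarrow> real) \<Rightarrow> real^'n \<Rightarrow> real" where
  "dnormL blk L y = sqrt (\<Sum>i\<in>UNIV. (1 / L i) * (norm (bproj blk i y))\<^sup>2)"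

definition DL :: "('n \<Rightarrow> 'm) \<Rightarrow> ('m \<Rightarrow> real) \<Rightarrow> real^'n \<Rightarrow> real^'n" where
  "DL blk L y = (\<chi> j. L (blk j) * y $ j)"

definition dL :: "('n \<Rightarrow> 'm::finite) \<Rightarrow> ('m \<Rightarrow> real) \<Rightarrow> (real^'n \<Rightarrow> real) \<Rightarrow> (real^'n \<Rightarrow> real^'n)
    \<Rightarrow> (real^'n \<Rightarrow> real) \<Rightarrow> real^'n \<Rightarrow> real^'n" where
  "dL blk L f g h x = (THE d. \<forall>s. f x + g x \<bullet> d + 1/2 * (normL blk L d)\<^sup>2 + h (x + d)
                                 \<le> f x + g x \<bullet> s + 1/2 * (normL blk L s)\<^sup>2 + h (x + s))"

definition M1 :: "('n \<Rightarrow> 'm::finite) \<Rightarrow> ('m \<Rightarrow> real) \<Rightarrow> (real^'n \<Rightarrow> real) \<Rightarrow> (real^'n \<Rightarrow> real^'n)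
    \<Rightarrow> (real^'n \<Rightarrow> real) \<Rightarrow> real^'n \<Rightarrow> real" where
  "M1 blk L f g h x = dnormL blk L (DL blk L (dL blk L f g h x))"

definition rcd_step :: "('n \<Rightarrow> 'm) \<Rightarrow> ('m \<Rightarrow> real) \<Rightarrow> (real^'n \<Rightarrow> real) \<Rightarrow> (real^'n \<Rightarrow> real^'n)
    \<Rightarrow> (real^'n \<Rightarrow> real) \<Rightarrow> 'm \<Rightarrow> real^'n \<Rightarrow> real^'n" where
  "rcd_step blk L f g h i x = x + (THE d. d \<in> blockspace blk i \<and>
      (\<forall>s\<in>blockspace blk i.
         f x + bproj blk i (g x) \<bullet> d + L i / 2 * (norm d)\<^sup>2 + h (x + d)
         \<le> f x + bproj blk i (g x) \<bullet> s + L i / 2 * (norm s)\<^sup>2 + h (x + s)))"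

text \<open>The iterate x^k produced by the index sequence i_0, ..., i_{k-1} (a list of length k).\<close>
definition rcd_iter :: "('n \<Rightarrow> 'm) \<Rightarrow> ('m \<Rightarrow> real) \<Rightarrow> (real^'n \<Rightarrow> real) \<Rightarrow> (real^'n \<Rightarrow> real^'n)
    \<Rightarrow> (real^'n \<Rightarrow> real) \<Rightarrow> real^'n \<Rightarrow> 'm list \<Rightarrow> real^'n" where
  "rcd_iter blk L f g h x0 is = foldl (\<lambda>x i. rcd_step blk L f g h i x) x0 is"

text \<open>Expectation of a function of (i_0,...,i_{k-1}) drawn i.i.d. uniformly from the blocks.\<close>
definition unif_expect :: "nat \<Rightarrow> ('m::finite list \<Rightarrow> real) \<Rightarrow> real" where
  "unif_expect k Z = (\<Sum>is\<in>{is::'m list. length is = k}. Z is) / real (CARD('m)) ^ k"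

end

theory Submission
  imports Defs
begin

text \<open>By the block descent lemma the block model f(x) + <grad_i f(x), s> + L_i/2 ||s||^2 + h(x + s)
  majorises F(x + U_i s), and it is L_i-strongly convex, so the block step decreases F by at least
  L_i/2 ||d_i||^2. Since h and ||.||_L are block separable, d_L(x) is the concatenation of the block
  steps, and averaging over the N blocks gives E[F(x^{k+1})] <= E[F(x^k)] - E[M_1(x^k,L)^2]/(2N).
  Telescoping against F^* yields the bound.\<close>

definition strongly_convex_on :: "'a::real_normed_vector set \<Rightarrow> real \<Rightarrow> ('a \<Rightarrow> real) \<Rightarrow> bool" where
  "strongly_convex_on C \<mu> Q \<longleftrightarrow> convex C \<and>
     (\<forall>s\<in>C. \<forall>t\<in>C. \<forall>u. 0 \<le> u \<longrightarrow> u \<le> 1 \<longrightarrow>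
        Q ((1 - u) *\<^sub>R s + u *\<^sub>R t) \<le> (1 - u) * Q s + u * Q t - \<mu> / 2 * u * (1 - u) * (norm (s - t))\<^sup>2)"

lemma strongly_convex_onD:
  assumes "strongly_convex_on C \<mu> Q" "s \<in> C" "t \<in> C" "0 \<le> u" "u \<le> 1"
  shows "Q ((1 - u) *\<^sub>R s + u *\<^sub>R t) \<le> (1 - u) * Q s + u * Q t - \<mu> / 2 * u * (1 - u) * (norm (s - t))\<^sup>2"
  using assms unfolding strongly_convex_on_def by blast

lemma power2_norm_convex_combination:
  fixes s t :: "'a::real_inner"
  shows "(norm ((1 - u) *\<^sub>R s + u *\<^sub>R t))\<^sup>2 = (1 - u) * (norm s)\<^sup>2 + u * (norm t)\<^sup>2 - u * (1 - u) * (norm (s - t))\<^sup>2"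
  by (simp add: power2_norm_eq_inner inner_add inner_diff inner_commute algebra_simps)

lemma strongly_convex_on_quadratic_add:
  fixes G :: "'a::real_inner"
  assumes "convex_on C \<phi>"
  shows "strongly_convex_on C \<mu> (\<lambda>s. G \<bullet> s + \<mu> / 2 * (norm s)\<^sup>2 + \<phi> s)"
  unfolding strongly_convex_on_def
proof (intro conjI ballI allI impI)
  show "convex C" using assms by (rule convex_on_imp_convex)
  fix s t :: 'a and u :: real
  assume "s \<in> C" "t \<in> C" "0 \<le> u" "u \<le> 1"
  then have "\<phi> ((1 - u) *\<^sub>R s + u *\<^sub>R t) \<le> (1 - u) * \<phi> s + u * \<phi> t"
    using assms by (intro convex_onD) auto
  moreover have "G \<bullet> ((1 - u) *\<^sub>R s + u *\<^sub>R t) = (1 - u) * (G \<bullet> s) + u * (G \<bullet> t)"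
    by (simp add: inner_add_right)
  moreover have "\<mu> / 2 * (norm ((1 - u) *\<^sub>R s + u *\<^sub>R t))\<^sup>2
      = (1 - u) * (\<mu> / 2 * (norm s)\<^sup>2) + u * (\<mu> / 2 * (norm t)\<^sup>2) - \<mu> / 2 * u * (1 - u) * (norm (s - t))\<^sup>2"
    unfolding power2_norm_convex_combination by (simp add: field_simps)
  ultimately show "G \<bullet> ((1 - u) *\<^sub>R s + u *\<^sub>R t) + \<mu> / 2 * (norm ((1 - u) *\<^sub>R s + u *\<^sub>R t))\<^sup>2 + \<phi> ((1 - u) *\<^sub>R s + u *\<^sub>R t)
      \<le> (1 - u) * (G \<bullet> s + \<mu> / 2 * (norm s)\<^sup>2 + \<phi> s) + u * (G \<bullet> t + \<mu> / 2 * (norm t)\<^sup>2 + \<phi> t)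
         - \<mu> / 2 * u * (1 - u) * (norm (s - t))\<^sup>2"
    by (simp add: algebra_simps)
qed

lemma strongly_convex_on_min_gap:
  assumes Q: "strongly_convex_on C \<mu> Q" and d: "d \<in> C" and s: "s \<in> C"
    and min: "\<And>t. t \<in> C \<Longrightarrow> Q d \<le> Q t"
  shows "Q d + \<mu> / 2 * (norm (s - d))\<^sup>2 \<le> Q s"
proof -
  have "u * (\<mu> / 2 * (norm (s - d))\<^sup>2) \<le> Q s - Q d" if u: "0 < u" "u < 1" for u
  proof -
    have "(1 - u) *\<^sub>R s + u *\<^sub>R d \<in> C"
      using Q d s u unfolding strongly_convex_on_def by (intro convexD) auto
    then have "Q d \<le> Q ((1 - u) *\<^sub>R s + u *\<^sub>R d)"
      by (rule min)
    also have "\<dots> \<le> (1 - u) * Q s + u * Q d - \<mu> / 2 * u * (1 - u) * (norm (s - d))\<^sup>2"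
      using strongly_convex_onD[OF Q s d] u by simp
    finally have "(1 - u) * (u * (\<mu> / 2 * (norm (s - d))\<^sup>2)) \<le> (1 - u) * (Q s - Q d)"
      by (simp add: algebra_simps)
    then show ?thesis using u by simp
  qed
  then have "\<mu> / 2 * (norm (s - d))\<^sup>2 \<le> Q s - Q d"
    by (rule field_le_mult_one_interval)
  then show ?thesis by simp
qed

lemma strongly_convex_on_min_unique:
  assumes Q: "strongly_convex_on C \<mu> Q" and "\<mu> > 0"
    and d1: "d1 \<in> C" "\<And>t. t \<in> C \<Longrightarrow> Q d1 \<le> Q t"
    and d2: "d2 \<in> C" "\<And>t. t \<in> C \<Longrightarrow> Q d2 \<le> Q t"
  shows "d1 = d2"
proof -
  have "Q d1 + \<mu> / 2 * (norm (d2 - d1))\<^sup>2 \<le> Q d2"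
    by (rule strongly_convex_on_min_gap[OF Q d1(1) d2(1) d1(2)])
  with d2(2)[OF d1(1)] have "\<mu> * (norm (d2 - d1))\<^sup>2 \<le> 0" by simp
  with \<open>\<mu> > 0\<close> show ?thesis by (simp add: mult_le_0_iff)
qed

lemma strongly_convex_on_attains_min:
  fixes Q :: "'a::euclidean_space \<Rightarrow> real"
  assumes Q: "strongly_convex_on C \<mu> Q" and "\<mu> > 0" and "closed C" and z: "z \<in> C"
    and cont: "continuous_on C Q" and lower: "\<And>s. s \<in> C \<Longrightarrow> B \<le> Q s"
  obtains d where "d \<in> C" "\<And>s. s \<in> C \<Longrightarrow> Q d \<le> Q s"
proof -
  define K where "K = C \<inter> Q -` {..Q z}"
  have "K \<subseteq> cball z (sqrt (8 * (Q z - B) / \<mu>))"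
  proof
    fix s assume "s \<in> K"
    then have s: "s \<in> C" and "Q s \<le> Q z" by (auto simp: K_def)
    have "B \<le> Q ((1 - 1/2) *\<^sub>R s + (1/2) *\<^sub>R z)"
      using Q s z unfolding strongly_convex_on_def by (intro lower convexD) auto
    also have "\<dots> \<le> Q s / 2 + Q z / 2 - \<mu> / 8 * (norm (s - z))\<^sup>2"
      using strongly_convex_onD[OF Q s z, of "1/2"] by simp
    finally have "(norm (z - s))\<^sup>2 \<le> 8 * (Q z - B) / \<mu>"
      using \<open>Q s \<le> Q z\<close> \<open>\<mu> > 0\<close> by (simp add: norm_minus_commute field_simps)
    then show "s \<in> cball z (sqrt (8 * (Q z - B) / \<mu>))"
      by (simp add: dist_norm real_le_rsqrt)
  qed
  moreover have "closed K"
    unfolding K_def using cont \<open>closed C\<close> by (rule continuous_closed_preimage) simp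
  ultimately have "compact K"
    by (meson bounded_cball bounded_subset compact_eq_bounded_closed)
  moreover have "z \<in> K" using z by (simp add: K_def)
  moreover have "continuous_on K Q" using cont by (rule continuous_on_subset) (simp add: K_def)
  ultimately obtain d where "d \<in> K" "\<And>s. s \<in> K \<Longrightarrow> Q d \<le> Q s"
    using continuous_attains_inf[of K Q] by blast
  then show ?thesis
    using that \<open>z \<in> K\<close> by (fastforce simp: K_def)
qed

lemma strongly_convex_on_ex1_min:
  fixes Q :: "'a::euclidean_space \<Rightarrow> real"
  assumes "strongly_convex_on C \<mu> Q" "\<mu> > 0" "closed C" "C \<noteq> {}" "continuous_on C Q" "\<And>s. s \<in> C \<Longrightarrow> B \<le> Q s"
  shows "\<exists>!d. d \<in> C \<and> (\<forall>s\<in>C. Q d \<le> Q s)"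
proof -
  obtain z where "z \<in> C" using \<open>C \<noteq> {}\<close> by blast
  then obtain d where d: "d \<in> C" "\<And>s. s \<in> C \<Longrightarrow> Q d \<le> Q s"
    using strongly_convex_on_attains_min[OF assms(1-3) _ assms(5,6)] by blast
  show ?thesis
  proof (rule ex1I[of _ d])
    show "d \<in> C \<and> (\<forall>s\<in>C. Q d \<le> Q s)" using d by blast
  next
    fix e assume "e \<in> C \<and> (\<forall>s\<in>C. Q e \<le> Q s)"
    then show "e = d"
      using strongly_convex_on_min_unique[OF assms(1,2)] d by blast
  qed
qed

lemma bproj_add: "bproj blk i (x + y) = bproj blk i x + bproj blk i y"
  by (simp add: bproj_def vec_eq_iff)

lemma bproj_diff: "bproj blk i (x - y) = bproj blk i x - bproj blk i y"
  by (simp add: bproj_def vec_eq_iff)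

lemma bproj_sum: "bproj blk i (sum f A) = (\<Sum>a\<in>A. bproj blk i (f a))"
  by (simp add: bproj_def vec_eq_iff sum_component if_distrib cong: if_cong)

lemma sum_bproj: "(\<Sum>i\<in>(UNIV :: 'm::finite set). bproj blk i x) = x"
  by (simp add: bproj_def vec_eq_iff sum_component)

lemma bproj_in_blockspace: "bproj blk i x \<in> blockspace blk i"
  by (simp add: bproj_def blockspace_def)

lemma bproj_blockspace: "s \<in> blockspace blk i \<Longrightarrow> bproj blk i s = s"
  by (auto simp: bproj_def blockspace_def vec_eq_iff)

lemma bproj_blockspace_other: "s \<in> blockspace blk i \<Longrightarrow> j \<noteq> i \<Longrightarrow> bproj blk j s = 0"
  by (auto simp: bproj_def blockspace_def vec_eq_iff)

lemma bproj_DL: "bproj blk i (DL blk L y) = L i *\<^sub>R bproj blk i y"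
  by (simp add: bproj_def DL_def vec_eq_iff)

lemma subspace_blockspace: "subspace (blockspace blk i)"
  by (simp add: subspace_def blockspace_def)

lemma closed_blockspace: "closed (blockspace blk i)"
  by (rule closed_subspace[OF subspace_blockspace])

lemma convex_blockspace: "convex (blockspace blk i)"
  by (rule subspace_imp_convex[OF subspace_blockspace])

lemma inner_blockspace_bproj: "s \<in> blockspace blk i \<Longrightarrow> y \<bullet> s = bproj blk i y \<bullet> s"
  by (auto simp: inner_vec_def bproj_def blockspace_def intro!: sum.cong)

lemma inner_eq_sum_bproj: "y \<bullet> d = (\<Sum>i\<in>(UNIV :: 'm::finite set). bproj blk i y \<bullet> bproj blk i d)"
proof -
  have "y \<bullet> d = y \<bullet> (\<Sum>i\<in>UNIV. bproj blk i d)"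
    by (simp add: sum_bproj)
  also have "\<dots> = (\<Sum>i\<in>UNIV. y \<bullet> bproj blk i d)"
    by (simp add: inner_sum_right)
  also have "\<dots> = (\<Sum>i\<in>UNIV. bproj blk i y \<bullet> bproj blk i d)"
    by (intro sum.cong refl inner_blockspace_bproj bproj_in_blockspace)
  finally show ?thesis .
qed

lemma power2_normL:
  "(\<And>i. L i > 0) \<Longrightarrow> (normL blk L d)\<^sup>2 = (\<Sum>i\<in>UNIV. L i * (norm (bproj blk i d))\<^sup>2)"
  unfolding normL_def by (simp add: less_imp_le sum_nonneg)

lemma power2_dnormL:
  "(\<And>i. L i > 0) \<Longrightarrow> (dnormL blk L d)\<^sup>2 = (\<Sum>i\<in>UNIV. (1 / L i) * (norm (bproj blk i d))\<^sup>2)"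
  unfolding dnormL_def by (simp add: less_imp_le sum_nonneg)

lemma block_descent:
  assumes grad: "\<And>x. (f has_derivative (\<lambda>v. g x \<bullet> v)) (at x)"
    and Lip: "\<And>x s. s \<in> blockspace blk i \<Longrightarrow> norm (bproj blk i (g (x + s)) - bproj blk i (g x)) \<le> Li * norm s"
    and s: "s \<in> blockspace blk i"
  shows "f (x + s) \<le> f x + bproj blk i (g x) \<bullet> s + Li / 2 * (norm s)\<^sup>2"
proof -
  define p where "p t = f (x + t *\<^sub>R s) - t * (g x \<bullet> s) - Li / 2 * t\<^sup>2 * (norm s)\<^sup>2" for t
  define p' where "p' t = g (x + t *\<^sub>R s) \<bullet> s - g x \<bullet> s - Li * t * (norm s)\<^sup>2" for t
  have p_deriv: "DERIV p t :> p' t" for t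
  proof -
    have "((\<lambda>t. f (x + t *\<^sub>R s)) has_derivative (\<lambda>u. g (x + t *\<^sub>R s) \<bullet> (u *\<^sub>R s))) (at t)"
      by (rule has_derivative_compose[OF _ grad]) (auto intro!: derivative_eq_intros)
    moreover have "(\<lambda>u. g (x + t *\<^sub>R s) \<bullet> (u *\<^sub>R s)) = (*) (g (x + t *\<^sub>R s) \<bullet> s)"
      by (simp add: fun_eq_iff)
    ultimately have "((\<lambda>t. f (x + t *\<^sub>R s)) has_real_derivative (g (x + t *\<^sub>R s) \<bullet> s)) (at t)"
      by (simp add: has_field_derivative_def)
    then show ?thesis unfolding p_def p'_def
      by (auto intro!: derivative_eq_intros)
  qed
  have p'_nonpos: "p' t \<le> 0" if "0 \<le> t" for t
  proof -
    have "g (x + t *\<^sub>R s) \<bullet> s - g x \<bullet> s = (bproj blk i (g (x + t *\<^sub>R s)) - bproj blk i (g x)) \<bullet> s"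
      using inner_blockspace_bproj[OF s] by (simp add: inner_diff_left)
    also have "\<dots> \<le> norm (bproj blk i (g (x + t *\<^sub>R s)) - bproj blk i (g x)) * norm s"
      by (rule norm_cauchy_schwarz)
    also have "\<dots> \<le> Li * norm (t *\<^sub>R s) * norm s"
      by (intro mult_right_mono Lip subspace_scale[OF subspace_blockspace s]) simp
    also have "\<dots> = Li * t * (norm s)\<^sup>2"
      using that by (simp add: power2_eq_square)
    finally show ?thesis unfolding p'_def by simp
  qed
  obtain z where "0 < z" "p 1 - p 0 = (1 - 0) * p' z"
    using MVT2[of 0 1 p p'] p_deriv by auto
  then have "p 1 \<le> p 0"
    using p'_nonpos[of z] by simp
  then show ?thesis
    unfolding p_def using inner_blockspace_bproj[OF s, of "g x"] by simp
qed

lemma unif_expect_Nil: "unif_expect 0 Z = Z []"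
proof -
  have "{is::'m::finite list. length is = 0} = {[]}" by auto
  then show ?thesis by (simp add: unif_expect_def)
qed

lemma sum_lists_length_Suc:
  fixes Z :: "'m::finite list \<Rightarrow> real"
  shows "(\<Sum>is\<in>{is. length is = Suc l}. Z is) = (\<Sum>is\<in>{is. length is = l}. \<Sum>i\<in>UNIV. Z (is @ [i]))"
proof -
  let ?snoc = "\<lambda>(is, i). is @ [i]" and ?A = "{is :: 'm list. length is = l} \<times> UNIV"
  have img: "?snoc ` ?A = {is. length is = Suc l}"
  proof (rule set_eqI, rule iffI)
    fix xs :: "'m list" assume xs: "xs \<in> {is. length is = Suc l}"
    then have "xs \<noteq> []" by auto
    with xs show "xs \<in> ?snoc ` ?A"
      by (intro image_eqI[where x="(butlast xs, last xs)"]) auto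
  qed auto
  have inj: "inj_on ?snoc ?A"
    by (auto simp: inj_on_def)
  have "(\<Sum>is\<in>{is. length is = Suc l}. Z is) = (\<Sum>p\<in>?A. Z (?snoc p))"
    by (rule sum.reindex_cong[OF inj img[symmetric]]) simp
  also have "\<dots> = (\<Sum>is\<in>{is. length is = l}. \<Sum>i\<in>UNIV. Z (is @ [i]))"
    by (simp add: sum.cartesian_product split_def)
  finally show ?thesis .
qed

lemma unif_expect_Suc:
  fixes Z :: "'m::finite list \<Rightarrow> real"
  shows "unif_expect (Suc l) Z = unif_expect l (\<lambda>is. (\<Sum>i\<in>UNIV. Z (is @ [i])) / real CARD('m))"
  by (simp add: unif_expect_def sum_lists_length_Suc sum_divide_distrib[symmetric] field_simps)

lemma unif_expect_mono:
  "(\<And>is. length is = l \<Longrightarrow> Y is \<le> Z is) \<Longrightarrow> unif_expect l Y \<le> unif_expect l Z"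
  unfolding unif_expect_def by (intro divide_right_mono sum_mono) auto

lemma unif_expect_const: "unif_expect l (\<lambda>_ :: 'm::finite list. c) = c"
  using card_lists_length_eq[of "UNIV :: 'm::finite set" l] by (simp add: unif_expect_def)

lemma unif_expect_diff: "unif_expect l (\<lambda>is. Y is - Z is) = unif_expect l Y - unif_expect l Z"
  by (simp add: unif_expect_def sum_subtractf diff_divide_distrib)

lemma unif_expect_divide: "unif_expect l (\<lambda>is. Z is / c) = unif_expect l Z / c"
  by (simp add: unif_expect_def sum_divide_distrib[symmetric])

lemma Min_le_telescoping:
  fixes a m :: "nat \<Rightarrow> real"
  assumes decr: "\<And>l. m l \<le> a l - a (Suc l)" and lower: "\<And>l. c \<le> a l"
  shows "Min (m ` {0..k}) \<le> (a 0 - c) / (real k + 1)"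
proof -
  have "(real k + 1) * Min (m ` {0..k}) = (\<Sum>l\<le>k. Min (m ` {0..k}))"
    by simp
  also have "\<dots> \<le> (\<Sum>l\<le>k. a l - a (Suc l))"
    by (intro sum_mono order.trans[OF Min_le decr]) auto
  also have "\<dots> \<le> a 0 - c"
    using lower[of "Suc k"] by (simp add: sum_telescope)
  finally show ?thesis
    by (simp add: field_simps add_pos_nonneg)
qed

locale block_composite =
  fixes blk :: "'n::finite \<Rightarrow> 'm::finite"
    and L :: "'m \<Rightarrow> real"
    and f :: "real^'n \<Rightarrow> real"
    and g :: "real^'n \<Rightarrow> real^'n"
    and h :: "real^'n \<Rightarrow> real"
    and hb :: "'m \<Rightarrow> real^'n \<Rightarrow> real"
  assumes grad: "\<And>x. (f has_derivative (\<lambda>v. g x \<bullet> v)) (at x)"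
    and Lpos: "\<And>i. L i > 0"
    and Lip: "\<And>x i s. s \<in> blockspace blk i \<Longrightarrow>
                 norm (bproj blk i (g (x + s)) - bproj blk i (g x)) \<le> L i * norm s"
    and h_cont: "continuous_on UNIV h"
    and h_sep: "\<And>x. h x = (\<Sum>i\<in>UNIV. hb i (bproj blk i x))"
    and hb_convex: "\<And>i. convex_on (blockspace blk i) (hb i)"
    and F_bdd: "bdd_below (range (\<lambda>x. f x + h x))"
begin

abbreviation F :: "real^'n \<Rightarrow> real" where
  "F x \<equiv> f x + h x"

definition Fstar :: real where
  "Fstar = (INF x. F x)"

lemma Fstar_le: "Fstar \<le> F x"
  unfolding Fstar_def by (rule cINF_lower[OF F_bdd]) simp

definition h_rest :: "'m \<Rightarrow> real^'n \<Rightarrow> real" where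
  "h_rest i x = (\<Sum>j\<in>UNIV - {i}. hb j (bproj blk j x))"

lemma h_add_block:
  assumes s: "s \<in> blockspace blk i"
  shows "h (x + s) = hb i (bproj blk i x + s) + h_rest i x"
proof -
  have "h (x + s) = hb i (bproj blk i (x + s)) + (\<Sum>j\<in>UNIV - {i}. hb j (bproj blk j (x + s)))"
    by (simp add: h_sep sum.remove[of UNIV i])
  also have "(\<Sum>j\<in>UNIV - {i}. hb j (bproj blk j (x + s))) = h_rest i x"
    unfolding h_rest_def by (intro sum.cong refl) (auto simp: bproj_add bproj_blockspace_other[OF s])
  finally show ?thesis by (simp add: bproj_add bproj_blockspace[OF s])
qed

text \<open>The block model minus the terms f(x) and h_rest i x, which do not depend on the step s.\<close>
definition block_obj :: "'m \<Rightarrow> real^'n \<Rightarrow> real^'n \<Rightarrow> real" where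
  "block_obj i x s = bproj blk i (g x) \<bullet> s + L i / 2 * (norm s)\<^sup>2 + hb i (bproj blk i x + s)"

lemma block_model_eq:
  "s \<in> blockspace blk i \<Longrightarrow>
     f x + bproj blk i (g x) \<bullet> s + L i / 2 * (norm s)\<^sup>2 + h (x + s) = f x + block_obj i x s + h_rest i x"
  by (simp add: block_obj_def h_add_block)

lemma convex_on_hb_shift: "convex_on (blockspace blk i) (\<lambda>s. hb i (bproj blk i x + s))"
proof (rule convex_onI[OF _ convex_blockspace])
  fix t :: real and s s' assume "0 < t" "t < 1" "s \<in> blockspace blk i" "s' \<in> blockspace blk i"
  moreover have "bproj blk i x + s \<in> blockspace blk i" "bproj blk i x + s' \<in> blockspace blk i"
    using calculation by (auto intro: subspace_add[OF subspace_blockspace] bproj_in_blockspace)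
  moreover have "bproj blk i x + ((1 - t) *\<^sub>R s + t *\<^sub>R s')
      = (1 - t) *\<^sub>R (bproj blk i x + s) + t *\<^sub>R (bproj blk i x + s')"
    by (simp add: algebra_simps)
  ultimately show "hb i (bproj blk i x + ((1 - t) *\<^sub>R s + t *\<^sub>R s'))
      \<le> (1 - t) * hb i (bproj blk i x + s) + t * hb i (bproj blk i x + s')"
    by (simp add: convex_onD[OF hb_convex])
qed

lemma strongly_convex_block_obj: "strongly_convex_on (blockspace blk i) (L i) (block_obj i x)"
proof -
  have "block_obj i x = (\<lambda>s. bproj blk i (g x) \<bullet> s + L i / 2 * (norm s)\<^sup>2 + hb i (bproj blk i x + s))"
    by (simp add: fun_eq_iff block_obj_def)
  then show ?thesis
    by (simp only: strongly_convex_on_quadratic_add[OF convex_on_hb_shift])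
qed

lemma block_obj_lower:
  assumes "s \<in> blockspace blk i"
  shows "Fstar - f x - h_rest i x \<le> block_obj i x s"
  using block_descent[OF grad Lip assms, of x] Fstar_le[of "x + s"] block_model_eq[OF assms, of x]
  by linarith

lemma continuous_on_block_obj: "continuous_on (blockspace blk i) (block_obj i x)"
proof -
  have "continuous_on (blockspace blk i)
      (\<lambda>s. bproj blk i (g x) \<bullet> s + L i / 2 * (norm s)\<^sup>2 + h (x + s) - h_rest i x)"
    by (intro continuous_intros continuous_on_compose2[OF h_cont]) auto
  then show ?thesis
    by (rule continuous_on_cong[THEN iffD1, rotated 2]) (simp_all add: block_obj_def h_add_block)
qed

lemma block_obj_ex1_min:
  "\<exists>!d. d \<in> blockspace blk i \<and> (\<forall>s\<in>blockspace blk i. block_obj i x d \<le> block_obj i x s)"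
proof (rule strongly_convex_on_ex1_min[OF strongly_convex_block_obj Lpos closed_blockspace _
      continuous_on_block_obj block_obj_lower])
  show "blockspace blk i \<noteq> {}"
    using subspace_0[OF subspace_blockspace, of blk i] by blast
qed

definition block_step :: "'m \<Rightarrow> real^'n \<Rightarrow> real^'n" where
  "block_step i x = (THE d. d \<in> blockspace blk i \<and> (\<forall>s\<in>blockspace blk i. block_obj i x d \<le> block_obj i x s))"

lemma block_step_in_blockspace: "block_step i x \<in> blockspace blk i"
  and block_step_min: "s \<in> blockspace blk i \<Longrightarrow> block_obj i x (block_step i x) \<le> block_obj i x s"
  using theI'[OF block_obj_ex1_min[of i x]] unfolding block_step_def by auto

lemma block_step_unique:
  "d \<in> blockspace blk i \<Longrightarrow> (\<And>s. s \<in> blockspace blk i \<Longrightarrow> block_obj i x d \<le> block_obj i x s) \<Longrightarrow>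
     d = block_step i x"
  using block_obj_ex1_min[of i x] block_step_in_blockspace block_step_min by blast

lemma rcd_step_eq: "rcd_step blk L f g h i x = x + block_step i x"
proof -
  have iff: "f x + bproj blk i (g x) \<bullet> d + L i / 2 * (norm d)\<^sup>2 + h (x + d)
        \<le> f x + bproj blk i (g x) \<bullet> s + L i / 2 * (norm s)\<^sup>2 + h (x + s)
      \<longleftrightarrow> block_obj i x d \<le> block_obj i x s"
    if "d \<in> blockspace blk i" "s \<in> blockspace blk i" for d s
    using block_model_eq[OF that(1), of x] block_model_eq[OF that(2), of x] by linarith
  have "(\<lambda>d. d \<in> blockspace blk i \<and> (\<forall>s\<in>blockspace blk i.
            f x + bproj blk i (g x) \<bullet> d + L i / 2 * (norm d)\<^sup>2 + h (x + d)
            \<le> f x + bproj blk i (g x) \<bullet> s + L i / 2 * (norm s)\<^sup>2 + h (x + s)))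
      = (\<lambda>d. d \<in> blockspace blk i \<and> (\<forall>s\<in>blockspace blk i. block_obj i x d \<le> block_obj i x s))"
    by (rule ext) (use iff in blast)
  then show ?thesis
    unfolding rcd_step_def block_step_def by simp
qed

lemma F_block_step_le: "F (x + block_step i x) \<le> F x - L i / 2 * (norm (block_step i x))\<^sup>2"
proof -
  let ?d = "block_step i x"
  have d: "?d \<in> blockspace blk i" by (rule block_step_in_blockspace)
  have zero: "0 \<in> blockspace blk i" by (rule subspace_0[OF subspace_blockspace])
  have "F (x + ?d) \<le> f x + block_obj i x ?d + h_rest i x"
    using block_descent[OF grad Lip d, of x] block_model_eq[OF d, of x] by linarith
  also have "block_obj i x ?d + L i / 2 * (norm ?d)\<^sup>2 \<le> block_obj i x 0"
    using strongly_convex_on_min_gap[OF strongly_convex_block_obj d zero block_step_min] by simp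
  moreover have "f x + block_obj i x 0 + h_rest i x = F x"
    using block_model_eq[OF zero, of x] by simp
  ultimately show ?thesis by linarith
qed

lemma full_model_eq:
  "f x + g x \<bullet> d + 1/2 * (normL blk L d)\<^sup>2 + h (x + d) = f x + (\<Sum>i\<in>UNIV. block_obj i x (bproj blk i d))"
proof -
  have "(\<Sum>i\<in>UNIV. block_obj i x (bproj blk i d))
      = (\<Sum>i\<in>UNIV. bproj blk i (g x) \<bullet> bproj blk i d) + 1/2 * (\<Sum>i\<in>UNIV. L i * (norm (bproj blk i d))\<^sup>2)
        + (\<Sum>i\<in>UNIV. hb i (bproj blk i (x + d)))"
    by (simp add: block_obj_def sum.distrib sum_distrib_left bproj_add)
  then show ?thesis
    using inner_eq_sum_bproj[where blk=blk and y="g x" and d=d] power2_normL[OF Lpos, where blk=blk and d=d]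
      h_sep[of "x + d"]
    by simp
qed

lemma bproj_sum_block_step: "bproj blk i (\<Sum>j\<in>UNIV. block_step j x) = block_step i x"
proof -
  have "bproj blk i (block_step j x) = (if j = i then block_step i x else 0)" for j
    using bproj_blockspace[OF block_step_in_blockspace] bproj_blockspace_other[OF block_step_in_blockspace]
    by auto
  then show ?thesis by (simp add: bproj_sum)
qed

lemma dL_eq_sum_block_step: "dL blk L f g h x = (\<Sum>j\<in>UNIV. block_step j x)"
  unfolding dL_def full_model_eq add_le_cancel_left
proof (rule the_equality)
  show "\<forall>s. (\<Sum>i\<in>UNIV. block_obj i x (bproj blk i (\<Sum>j\<in>UNIV. block_step j x)))
          \<le> (\<Sum>i\<in>UNIV. block_obj i x (bproj blk i s))"
    by (auto simp: bproj_sum_block_step intro!: sum_mono block_step_min bproj_in_blockspace)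
next
  fix d assume d_min: "\<forall>s. (\<Sum>i\<in>UNIV. block_obj i x (bproj blk i d)) \<le> (\<Sum>i\<in>UNIV. block_obj i x (bproj blk i s))"
  have "bproj blk i d = block_step i x" for i
  proof (rule block_step_unique[OF bproj_in_blockspace])
    fix t assume t: "t \<in> blockspace blk i"
    define s where "s = d - bproj blk i d + t"
    have "bproj blk i s = t"
      unfolding s_def by (simp add: bproj_add bproj_diff bproj_blockspace[OF bproj_in_blockspace] bproj_blockspace[OF t])
    moreover have "bproj blk j s = bproj blk j d" if "j \<noteq> i" for j
      unfolding s_def using that
      by (simp add: bproj_add bproj_diff bproj_blockspace_other[OF bproj_in_blockspace] bproj_blockspace_other[OF t])
    ultimately have "(\<Sum>j\<in>UNIV. block_obj j x (bproj blk j s))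
        = block_obj i x t + (\<Sum>j\<in>UNIV - {i}. block_obj j x (bproj blk j d))"
      by (simp add: sum.remove[of UNIV i])
    moreover have "(\<Sum>j\<in>UNIV. block_obj j x (bproj blk j d))
        = block_obj i x (bproj blk i d) + (\<Sum>j\<in>UNIV - {i}. block_obj j x (bproj blk j d))"
      by (simp add: sum.remove[of UNIV i])
    ultimately show "block_obj i x (bproj blk i d) \<le> block_obj i x t"
      using d_min[rule_format, of s] by simp
  qed
  then show "d = (\<Sum>j\<in>UNIV. block_step j x)"
    using sum_bproj[of blk d] by simp
qed

lemma power2_M1: "(M1 blk L f g h x)\<^sup>2 = (\<Sum>i\<in>UNIV. L i * (norm (block_step i x))\<^sup>2)"
proof -
  have "1 / L i * (norm (L i *\<^sub>R block_step i x))\<^sup>2 = L i * (norm (block_step i x))\<^sup>2" for i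
    using Lpos[of i] by (simp add: power_mult_distrib power2_eq_square)
  then show ?thesis
    by (simp add: M1_def power2_dnormL[OF Lpos] bproj_DL dL_eq_sum_block_step bproj_sum_block_step)
qed

lemma sum_F_rcd_step_le:
  "(\<Sum>i\<in>UNIV. F (rcd_step blk L f g h i x)) \<le> real CARD('m) * F x - (M1 blk L f g h x)\<^sup>2 / 2"
proof -
  have "(\<Sum>i\<in>UNIV. F (rcd_step blk L f g h i x)) \<le> (\<Sum>i\<in>UNIV. F x - L i / 2 * (norm (block_step i x))\<^sup>2)"
    unfolding rcd_step_eq by (intro sum_mono F_block_step_le)
  also have "\<dots> = real CARD('m) * F x - (\<Sum>i\<in>UNIV. L i * (norm (block_step i x))\<^sup>2) / 2"
    by (simp add: sum_subtractf sum_divide_distrib[symmetric])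
  finally show ?thesis unfolding power2_M1 .
qed

lemma unif_expect_F_rcd_iter_Suc:
  "unif_expect (Suc l) (\<lambda>is. F (rcd_iter blk L f g h x0 is))
     \<le> unif_expect l (\<lambda>is. F (rcd_iter blk L f g h x0 is))
       - unif_expect l (\<lambda>is. (M1 blk L f g h (rcd_iter blk L f g h x0 is))\<^sup>2) / (2 * real CARD('m))"
proof -
  let ?x = "rcd_iter blk L f g h x0" and ?N = "real CARD('m)"
  have "?x (is @ [i]) = rcd_step blk L f g h i (?x is)" for "is" i
    by (simp add: rcd_iter_def)
  then have "unif_expect (Suc l) (\<lambda>is. F (?x is))
      = unif_expect l (\<lambda>is. (\<Sum>i\<in>UNIV. F (rcd_step blk L f g h i (?x is))) / ?N)"
    by (simp add: unif_expect_Suc)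
  also have "\<dots> \<le> unif_expect l (\<lambda>is. F (?x is) - (M1 blk L f g h (?x is))\<^sup>2 / (2 * ?N))"
  proof (rule unif_expect_mono)
    fix "is" :: "'m list"
    have "(\<Sum>i\<in>UNIV. F (rcd_step blk L f g h i (?x is))) / ?N \<le> (?N * F (?x is) - (M1 blk L f g h (?x is))\<^sup>2 / 2) / ?N"
      by (intro divide_right_mono sum_F_rcd_step_le) simp
    then show "(\<Sum>i\<in>UNIV. F (rcd_step blk L f g h i (?x is))) / ?N \<le> F (?x is) - (M1 blk L f g h (?x is))\<^sup>2 / (2 * ?N)"
      by (simp add: field_simps)
  qed
  finally show ?thesis
    by (simp add: unif_expect_diff unif_expect_divide)
qed

end

theorem theorem2:
  fixes blk :: "'n::finite \<Rightarrow> 'm::finite"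
    and L :: "'m \<Rightarrow> real"
    and f :: "real^'n \<Rightarrow> real"
    and g :: "real^'n \<Rightarrow> real^'n"
    and h :: "real^'n \<Rightarrow> real"
    and hb :: "'m \<Rightarrow> real^'n \<Rightarrow> real"
    and x0 :: "real^'n"
    and k :: nat
  assumes blocks_nonempty: "surj blk"
    and grad: "\<And>x. (f has_derivative (\<lambda>v. g x \<bullet> v)) (at x)"
    and Lpos: "\<And>i. L i > 0"
    and Lip: "\<And>x i s. s \<in> blockspace blk i \<Longrightarrow>
                 norm (bproj blk i (g (x + s)) - bproj blk i (g x)) \<le> L i * norm s"
    and h_cont: "continuous_on UNIV h"
    and h_sep: "\<And>x. h x = (\<Sum>i\<in>UNIV. hb i (bproj blk i x))"
    and hb_convex: "\<And>i. convex_on (blockspace blk i) (hb i)"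
    and F_bdd: "bdd_below (range (\<lambda>x. f x + h x))"
  shows "Min ((\<lambda>l. unif_expect l (\<lambda>is. (M1 blk L f g h (rcd_iter blk L f g h x0 is))\<^sup>2)) ` {0..k})
         \<le> 2 * real (CARD('m)) * (f x0 + h x0 - (INF x. f x + h x)) / (real k + 1)"
proof -
  interpret block_composite blk L f g h hb
    by unfold_locales (fact grad Lpos Lip h_cont h_sep hb_convex F_bdd)+
  define N where "N = real CARD('m)"
  define a where "a l = 2 * N * unif_expect l (\<lambda>is. F (rcd_iter blk L f g h x0 is))" for l
  have "N > 0" by (simp add: N_def)
  have "unif_expect l (\<lambda>is. (M1 blk L f g h (rcd_iter blk L f g h x0 is))\<^sup>2) \<le> a l - a (Suc l)" for l
    using unif_expect_F_rcd_iter_Suc[of l x0] \<open>N > 0\<close> by (simp add: a_def N_def field_simps)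
  moreover have "2 * N * Fstar \<le> a l" for l
    using unif_expect_mono[of l "\<lambda>_. Fstar", OF Fstar_le] \<open>N > 0\<close> by (simp add: a_def unif_expect_const)
  ultimately have "Min ((\<lambda>l. unif_expect l (\<lambda>is. (M1 blk L f g h (rcd_iter blk L f g h x0 is))\<^sup>2)) ` {0..k})
      \<le> (a 0 - 2 * N * Fstar) / (real k + 1)"
    by (rule Min_le_telescoping)
  also have "a 0 - 2 * N * Fstar = 2 * N * (F x0 - Fstar)"
    by (simp add: a_def unif_expect_Nil rcd_iter_def right_diff_distrib)
  finally show ?thesis
    by (simp add: N_def Fstar_def)
qed

end
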